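(* Let $\bm F\in\mathbb{C}^{N\times N}$ be an invertible Hermitian matrix with spectral decomposition $\bm F=\sum_{i=1}^N\lambda_i\bm v_i\bm v_i^\dagger$ ($\{\bm v_i\}$ orthonormal), spectral norm $s=\|\bm F\|_*=\max_i|\lambda_i|$ and condition number $\kappa$, so that $s/\kappa\le|\lambda_i|\le s$ for all $i$. Let $\gamma>0$, $0<\epsilon\le 1$, and $h(\lambda)=\frac{\sqrt{\gamma}\lambda}{\lambda^2+\gamma}$. Let $\bm y=\sum_i\beta_i\bm v_i\in\mathbb{C}^N$ be a unit vector, and let $\overline{\lambda_1},\dots,\overline{\lambda_N}\in\mathbb{R}$ satisfy $|\overline{\lambda_i}-\lambda_i|\le \frac{s}{4\kappa}\epsilon$ for all $i$. Define $$\bm w=\frac{\sum_i\beta_i h(\overline{\lambda_i})\bm v_i}{\big\|\sum_i\beta_i h(\overline{\lambda_i})\bm v_i\big\|},\qquad \bm w^*=\frac{\sum_i\beta_i h(\lambda_i)\bm v_i}{\big\|\sum_i\beta_i h(\lambda_i)\bm v_i\big\|}.$$ Then both are well defined, $\bm w^*$ is the unit vector proportional to $(\bm F^\dagger\bm F+\gamma\bm I_N)^{-1}\bm F^\dagger\bm y$, and $\|\bm w-\bm w^*\|\le\epsilon$.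
   Context: This is the correctness part of the paper's main theorem (Theorem 2): $\bm w$ is the (normalized) output of the algorithm after post-selection, using eigenvalue estimates $\overline{\lambda_i}$, and $\bm w^*$ is the normalized optimal fit parameter of the regularized least squares problem $\min_{\bm w}\|\bm F\bm w-\bm y\|^2+\gamma\|\bm w\|^2$. Norms are Euclidean. *)

theory Defs
  imports "HOL-Analysis.Analysis"
begin

text \<open>Complex vectors in C^N are modelled as complex^'n for a finite index type 'n
  (N = CARD('n)); the norm on complex^'n is the Euclidean norm.\<close>

definition cinner :: "complex^'n \<Rightarrow> complex^'n \<Rightarrow> complex" where
  "cinner x y = (\<Sum>i\<in>UNIV. cnj (x $ i) * y $ i)"

definition ctranspose :: "complex^'n^'m \<Rightarrow> complex^'m^'n" where
  "ctranspose A = (\<chi> i j. cnj (A $ j $ i))"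

definition outer :: "complex^'n \<Rightarrow> complex^'n \<Rightarrow> complex^'n^'n" where
  "outer x y = (\<chi> a b. x $ a * cnj (y $ b))"

definition orthonormal_family :: "('n \<Rightarrow> complex^'n) \<Rightarrow> bool" where
  "orthonormal_family v \<longleftrightarrow> (\<forall>i j. cinner (v i) (v j) = (if i = j then 1 else 0))"

definition hfun :: "real \<Rightarrow> real \<Rightarrow> real" where
  "hfun g x = sqrt g * x / (x\<^sup>2 + g)"

end

theory Submission
  imports Defs
begin

text \<open>In the orthonormal eigenbasis \<open>v\<close> every matrix in sight is diagonal: \<open>F\<close> acts by \<open>\<lambda>\<^sub>i\<close> and
  \<open>(F\<^sup>\<dagger>F + \<gamma>I)\<^sup>-\<^sup>1F\<^sup>\<dagger>\<close> by \<open>\<lambda>\<^sub>i/(\<lambda>\<^sub>i\<^sup>2 + \<gamma>) = h(\<lambda>\<^sub>i)/\<surd>\<gamma>\<close>, so \<open>w\<^sup>*\<close> is the normalized solution of the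
  regularized problem, and both \<open>w\<close> and \<open>w\<^sup>*\<close> are normalizations of coefficient vectors
  \<open>b\<^sub>i = \<beta>\<^sub>i h(\<lambda>\<^sub>i')\<close>, \<open>a\<^sub>i = \<beta>\<^sub>i h(\<lambda>\<^sub>i)\<close>. Since \<open>s/\<kappa> = min |\<lambda>\<^sub>i|\<close>, every estimate has relative
  error \<open>|\<lambda>\<^sub>i' - \<lambda>\<^sub>i| \<le> |\<lambda>\<^sub>i| \<epsilon>/4\<close>, which forces \<open>|h(\<lambda>\<^sub>i') - h(\<lambda>\<^sub>i)| \<le> \<epsilon>/3 |h(\<lambda>\<^sub>i)|\<close>. Hence
  \<open>\<parallel>b - a\<parallel> \<le> \<epsilon>/3 \<parallel>a\<parallel>\<close>, and normalizing at most doubles a relative error.\<close>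

definition column_matrix :: "('n \<Rightarrow> complex^'m) \<Rightarrow> complex^'n^'m" where
  "column_matrix v = (\<chi> a b. v b $ a)"

definition diag_matrix :: "('n \<Rightarrow> complex) \<Rightarrow> complex^'n^'n" where
  "diag_matrix d = (\<chi> i j. if i = j then d i else 0)"

definition spectral_matrix :: "('n \<Rightarrow> complex^'n) \<Rightarrow> ('n \<Rightarrow> complex) \<Rightarrow> complex^'n^'n" where
  "spectral_matrix v d = column_matrix v ** diag_matrix d ** ctranspose (column_matrix v)"

lemma sum_scaleC_eq_column_matrix_mult:
  "(\<Sum>i\<in>UNIV. c i *s v i) = column_matrix v *v (\<chi> i. c i)"
  by (simp add: vec_eq_iff matrix_vector_mult_def column_matrix_def mult.commute)

lemma ctranspose_column_matrix_mult_self: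
  assumes "orthonormal_family v"
  shows "ctranspose (column_matrix v) ** column_matrix v = mat 1"
  using assms unfolding orthonormal_family_def cinner_def
  by (simp add: vec_eq_iff matrix_matrix_mult_def ctranspose_def column_matrix_def mat_def)

lemma column_matrix_mult_ctranspose:
  assumes "orthonormal_family v"
  shows "column_matrix v ** ctranspose (column_matrix v) = mat 1"
  using ctranspose_column_matrix_mult_self[OF assms] matrix_left_right_inverse by blast

lemma ctranspose_column_matrix_cancel:
  assumes "orthonormal_family v"
  shows "ctranspose (column_matrix v) *v (column_matrix v *v x) = x"
  by (simp only: matrix_vector_mul_assoc ctranspose_column_matrix_mult_self[OF assms]
      matrix_vector_mul_lid)

lemma cinner_matrix_vector_mult: "cinner (A *v x) y = cinner x (ctranspose A *v y)"
proof -
  have "cinner (A *v x) y = (\<Sum>i\<in>UNIV. \<Sum>j\<in>UNIV. cnj (A$i$j) * cnj (x$j) * y$i)"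
    unfolding cinner_def matrix_vector_mult_def by (simp add: sum_distrib_right)
  also have "\<dots> = (\<Sum>j\<in>UNIV. \<Sum>i\<in>UNIV. cnj (A$i$j) * cnj (x$j) * y$i)"
    by (rule sum.swap)
  also have "\<dots> = cinner x (ctranspose A *v y)"
    unfolding cinner_def matrix_vector_mult_def ctranspose_def
    by (simp add: sum_distrib_left mult_ac)
  finally show ?thesis .
qed

lemma cinner_self_eq_norm_power2: "cinner x x = complex_of_real ((norm x)\<^sup>2)"
proof -
  have "(norm x)\<^sup>2 = (\<Sum>i\<in>UNIV. (norm (x$i))\<^sup>2)"
    by (simp add: norm_vec_def L2_set_def sum_nonneg)
  then have "complex_of_real ((norm x)\<^sup>2) = (\<Sum>i\<in>UNIV. complex_of_real ((norm (x$i))\<^sup>2))"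
    by (simp only: of_real_sum)
  also have "\<dots> = cinner x x"
    unfolding cinner_def complex_norm_square by (simp add: mult.commute)
  finally show ?thesis ..
qed

lemma norm_column_matrix_mult:
  assumes "orthonormal_family v"
  shows "norm (column_matrix v *v x) = norm x"
proof -
  have "complex_of_real ((norm (column_matrix v *v x))\<^sup>2)
      = cinner x (ctranspose (column_matrix v) *v (column_matrix v *v x))"
    by (simp only: cinner_self_eq_norm_power2[symmetric] cinner_matrix_vector_mult)
  also have "\<dots> = complex_of_real ((norm x)\<^sup>2)"
    by (simp only: ctranspose_column_matrix_cancel[OF assms] cinner_self_eq_norm_power2)
  finally have "(norm (column_matrix v *v x))\<^sup>2 = (norm x)\<^sup>2"
    by (simp only: of_real_eq_iff)
  then show ?thesis
    by simp
qed

lemma matrix_vector_mult_scaleR_right: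
  fixes A :: "'a::real_algebra_1^'n^'m"
  shows "A *v (r *\<^sub>R x) = r *\<^sub>R (A *v x)"
  by (simp add: vec_eq_iff matrix_vector_mult_def scaleR_sum_right)

lemma column_matrix_mult_normalize:
  assumes "orthonormal_family v"
  shows "(column_matrix v *v x) /\<^sub>R norm (column_matrix v *v x) = column_matrix v *v (x /\<^sub>R norm x)"
  by (simp only: norm_column_matrix_mult[OF assms] matrix_vector_mult_scaleR_right)

lemma diag_matrix_mult: "diag_matrix d ** diag_matrix e = diag_matrix (\<lambda>i. d i * e i)"
proof -
  have "(\<Sum>k\<in>UNIV. (if i = k then d i else 0) * (if k = j then e k else 0))
      = (if i = j then d i * e i else 0)" for i j
  proof -
    have "(\<Sum>k\<in>UNIV. (if i = k then d i else 0) * (if k = j then e k else 0))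
        = (\<Sum>k\<in>UNIV. if i = k then d i * (if k = j then e k else 0) else 0)"
      by (rule sum.cong) auto
    then show ?thesis
      by simp
  qed
  then show ?thesis
    by (simp add: vec_eq_iff matrix_matrix_mult_def diag_matrix_def)
qed

lemma diag_matrix_vector_mult: "diag_matrix d *v x = (\<chi> i. d i * x $ i)"
  by (simp add: vec_eq_iff matrix_vector_mult_def diag_matrix_def if_distrib if_distribR
      cong del: if_weak_cong)

lemma diag_matrix_one: "diag_matrix (\<lambda>i. 1) = mat 1"
  by (simp add: vec_eq_iff diag_matrix_def mat_def)

lemma spectral_matrix_component:
  "spectral_matrix v d $ a $ b = (\<Sum>k\<in>UNIV. v k $ a * d k * cnj (v k $ b))"
proof -
  have "(column_matrix v ** diag_matrix d) $ a $ k = v k $ a * d k" for a k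
  proof -
    have "(column_matrix v ** diag_matrix d) $ a $ k = (\<Sum>j\<in>UNIV. v j $ a * (if j = k then d j else 0))"
      by (simp add: matrix_matrix_mult_def column_matrix_def diag_matrix_def)
    also have "\<dots> = (\<Sum>j\<in>UNIV. if k = j then v j $ a * d j else 0)"
      by (rule sum.cong) auto
    finally show ?thesis
      by simp
  qed
  moreover have "ctranspose (column_matrix v) $ k $ b = cnj (v k $ b)" for k
    by (simp add: ctranspose_def column_matrix_def)
  ultimately show ?thesis
    by (simp add: spectral_matrix_def matrix_matrix_mult_def[of "column_matrix v ** diag_matrix d"])
qed

lemma spectral_matrix_add: "spectral_matrix v d + spectral_matrix v e = spectral_matrix v (\<lambda>i. d i + e i)"
  by (simp add: vec_eq_iff spectral_matrix_component sum.distrib[symmetric] algebra_simps)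

lemma spectral_matrix_scaleR: "r *\<^sub>R spectral_matrix v d = spectral_matrix v (\<lambda>i. of_real r * d i)"
  unfolding vec_eq_iff vector_scaleR_component spectral_matrix_component
  by (simp add: scaleR_conv_of_real sum_distrib_left mult_ac)

lemma spectral_matrix_mult:
  assumes "orthonormal_family v"
  shows "spectral_matrix v d ** spectral_matrix v e = spectral_matrix v (\<lambda>i. d i * e i)"
proof -
  let ?V = "column_matrix v"
  have "spectral_matrix v d ** spectral_matrix v e
      = ?V ** (diag_matrix d ** (ctranspose ?V ** ?V) ** diag_matrix e) ** ctranspose ?V"
    unfolding spectral_matrix_def by (simp only: matrix_mul_assoc)
  then show ?thesis
    unfolding ctranspose_column_matrix_mult_self[OF assms] matrix_mul_rid diag_matrix_mult
    by (simp only: spectral_matrix_def matrix_mul_assoc)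
qed

lemma spectral_matrix_one:
  assumes "orthonormal_family v"
  shows "spectral_matrix v (\<lambda>i. 1) = mat 1"
  unfolding spectral_matrix_def diag_matrix_one matrix_mul_rid column_matrix_mult_ctranspose[OF assms] ..

lemma spectral_matrix_vector_mult:
  assumes "orthonormal_family v"
  shows "spectral_matrix v d *v (column_matrix v *v c) = column_matrix v *v (\<chi> i. d i * c $ i)"
  unfolding spectral_matrix_def
  by (simp only: matrix_vector_mul_assoc[symmetric] ctranspose_column_matrix_cancel[OF assms]
      diag_matrix_vector_mult)

lemma spectral_matrix_of_outer_sum:
  "(\<Sum>i\<in>UNIV. lam i *\<^sub>R outer (v i) (v i)) = spectral_matrix v (\<lambda>i. of_real (lam i))"
proof -
  have "\<And>r (z::complex). r *\<^sub>R z = of_real r * z"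
    by (rule scaleR_conv_of_real)
  then show ?thesis
    unfolding vec_eq_iff spectral_matrix_component by (simp add: outer_def mult_ac)
qed

lemma spectral_matrix_eigenvalue_nonzero:
  fixes v :: "'n::finite \<Rightarrow> complex^'n"
  assumes "orthonormal_family v" and "invertible (spectral_matrix v d)"
  shows "d i \<noteq> 0"
proof
  assume "d i = 0"
  define e :: "complex^'n" where "e = (\<chi> j. if j = i then 1 else 0)"
  have "(\<chi> j. d j * e $ j) = 0"
    using \<open>d i = 0\<close> by (simp add: vec_eq_iff e_def)
  then have "spectral_matrix v d *v (column_matrix v *v e) = 0"
    by (simp add: spectral_matrix_vector_mult[OF assms(1)])
  then have "column_matrix v *v e = 0"
    using inj_matrix_vector_mult[OF assms(2)] by (metis injD matrix_vector_mult_0_right)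
  then have "e = 0"
    by (metis ctranspose_column_matrix_cancel[OF assms(1)] matrix_vector_mult_0_right)
  then have "e $ i = 0"
    by simp
  then show False
    by (simp add: e_def)
qed

lemma matrix_inv_eqI:
  fixes A B :: "'a::semiring_1^'n^'n"
  assumes "A ** B = mat 1" "B ** A = mat 1"
  shows "matrix_inv A = B"
proof -
  have inv: "A ** matrix_inv A = mat 1 \<and> matrix_inv A ** A = mat 1"
    unfolding matrix_inv_def by (rule someI[of _ B]) (use assms in blast)
  have "matrix_inv A = matrix_inv A ** (A ** B)"
    using assms by simp
  also have "\<dots> = B"
    using inv by (simp add: matrix_mul_assoc)
  finally show ?thesis .
qed

lemma regularized_solution_spectral:
  fixes lam :: "'n::finite \<Rightarrow> real"
  assumes onb: "orthonormal_family v"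
    and F: "F = spectral_matrix v (\<lambda>i. of_real (lam i))" and herm: "ctranspose F = F"
    and gam: "\<gamma> > 0"
  shows "matrix_inv (ctranspose F ** F + \<gamma> *\<^sub>R mat 1) *v (ctranspose F *v (column_matrix v *v c))
       = column_matrix v *v (\<chi> i. of_real (lam i / ((lam i)\<^sup>2 + \<gamma>)) * c $ i)"
proof -
  have pos: "(lam i)\<^sup>2 + \<gamma> > 0" for i
    using gam by (intro add_nonneg_pos) auto
  have "ctranspose F ** F + \<gamma> *\<^sub>R mat 1 = spectral_matrix v (\<lambda>i. of_real ((lam i)\<^sup>2 + \<gamma>))"
    unfolding herm spectral_matrix_one[OF onb, symmetric] spectral_matrix_scaleR
    by (simp add: F spectral_matrix_mult[OF onb] spectral_matrix_add power2_eq_square)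
  moreover have "matrix_inv (spectral_matrix v (\<lambda>i. of_real ((lam i)\<^sup>2 + \<gamma>)))
      = spectral_matrix v (\<lambda>i. of_real (1 / ((lam i)\<^sup>2 + \<gamma>)))"
  proof (rule matrix_inv_eqI)
    have "((lam i)\<^sup>2 + \<gamma>) * (1 / ((lam i)\<^sup>2 + \<gamma>)) = 1" for i
      using pos[of i] by simp
    then have "of_real ((lam i)\<^sup>2 + \<gamma>) * of_real (1 / ((lam i)\<^sup>2 + \<gamma>)) = (1::complex)" for i
      by (metis of_real_mult of_real_1)
    then show "spectral_matrix v (\<lambda>i. of_real ((lam i)\<^sup>2 + \<gamma>))
        ** spectral_matrix v (\<lambda>i. of_real (1 / ((lam i)\<^sup>2 + \<gamma>))) = mat 1"
      and "spectral_matrix v (\<lambda>i. of_real (1 / ((lam i)\<^sup>2 + \<gamma>)))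
        ** spectral_matrix v (\<lambda>i. of_real ((lam i)\<^sup>2 + \<gamma>)) = mat 1"
      by (simp_all add: spectral_matrix_mult[OF onb] spectral_matrix_one[OF onb] mult.commute)
  qed
  moreover have "(complex_of_real (lam i))\<^sup>2 + of_real \<gamma> \<noteq> 0" for i
    using pos[of i] by (metis of_real_add of_real_eq_0_iff of_real_power less_irrefl)
  ultimately show ?thesis
    unfolding herm by (simp add: F spectral_matrix_vector_mult[OF onb] mult_ac)
qed

lemma regularized_solution_hfun:
  fixes lam :: "'n::finite \<Rightarrow> real"
  assumes "orthonormal_family v"
    and "F = spectral_matrix v (\<lambda>i. of_real (lam i))" and "ctranspose F = F"
    and gam: "\<gamma> > 0"
  shows "matrix_inv (ctranspose F ** F + \<gamma> *\<^sub>R mat 1) *v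
           (ctranspose F *v (column_matrix v *v (\<chi> i. c i)))
       = inverse (sqrt \<gamma>) *\<^sub>R (column_matrix v *v (\<chi> i. c i * of_real (hfun \<gamma> (lam i))))"
proof -
  have "lam i / ((lam i)\<^sup>2 + \<gamma>) = inverse (sqrt \<gamma>) * hfun \<gamma> (lam i)" for i
    using gam by (simp add: hfun_def)
  then have "(\<chi> i. of_real (lam i / ((lam i)\<^sup>2 + \<gamma>)) * (\<chi> i. c i) $ i)
      = inverse (sqrt \<gamma>) *\<^sub>R (\<chi> i. c i * of_real (hfun \<gamma> (lam i)))"
    unfolding vec_eq_iff vector_scaleR_component by (simp add: scaleR_conv_of_real mult_ac)
  then show ?thesis
    by (simp only: regularized_solution_spectral[OF assms] matrix_vector_mult_scaleR_right)
qed

lemma hfun_nonzero: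
  assumes "x \<noteq> 0" "g > 0"
  shows "hfun g x \<noteq> 0"
proof -
  have "x\<^sup>2 + g > 0"
    using assms by (intro add_nonneg_pos) auto
  then show ?thesis
    using assms unfolding hfun_def by simp
qed

lemma hfun_diff:
  assumes "g > 0"
  shows "hfun g x' - hfun g x = sqrt g * (x' - x) * (g - x * x') / ((x'\<^sup>2 + g) * (x\<^sup>2 + g))"
proof -
  have "x'\<^sup>2 + g > 0" "x\<^sup>2 + g > 0"
    using assms by (auto intro: add_nonneg_pos)
  then show ?thesis
    unfolding hfun_def by (simp add: field_simps) (simp add: power2_eq_square algebra_simps)
qed

lemma mult_pos_of_close:
  fixes x x' :: real
  assumes "x \<noteq> 0" "\<bar>x' - x\<bar> \<le> \<bar>x\<bar> / 4"
  shows "0 < x * x'"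
proof -
  have "\<bar>x * (x' - x)\<bar> \<le> \<bar>x\<bar> * (\<bar>x\<bar> / 4)"
    unfolding abs_mult by (rule mult_left_mono[OF assms(2)]) simp
  also have "\<dots> = x\<^sup>2 / 4"
    by (metis power2_abs power2_eq_square times_divide_eq_right)
  finally have "\<bar>x * (x' - x)\<bar> \<le> x\<^sup>2 / 4" .
  moreover have "x * x' = x\<^sup>2 + x * (x' - x)"
    by (simp add: power2_eq_square algebra_simps)
  moreover have "x\<^sup>2 > 0"
    using assms(1) by simp
  ultimately show ?thesis
    using abs_ge_minus_self[of "x * (x' - x)"] by linarith
qed

lemma mult_le_power2_of_close:
  fixes x x' :: real
  assumes "\<bar>x' - x\<bar> \<le> \<bar>x\<bar> / 4"
  shows "x * x' \<le> 4/3 * x'\<^sup>2"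
proof -
  have "\<bar>x\<bar> \<le> 4/3 * \<bar>x'\<bar>"
    using assms by linarith
  then have "\<bar>x\<bar> * \<bar>x'\<bar> \<le> 4/3 * \<bar>x'\<bar> * \<bar>x'\<bar>"
    by (rule mult_right_mono) simp
  then show ?thesis
    by (simp add: power2_eq_square abs_mult[symmetric])
qed

text \<open>The factor \<open>g - x x'\<close> of \<open>hfun_diff\<close> is bounded by \<open>4/3 (x'\<^sup>2 + g)\<close> because \<open>0 < x x' \<le> 4/3 x'\<^sup>2\<close>;
  what remains is exactly \<open>|x' - x| |h(x)| / |x|\<close>.\<close>

lemma hfun_relative_error:
  assumes x: "x \<noteq> 0" and close: "\<bar>x' - x\<bar> \<le> \<bar>x\<bar> * e / 4"
    and e: "0 < e" "e \<le> 1" and g: "g > 0"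
  shows "\<bar>hfun g x' - hfun g x\<bar> \<le> e / 3 * \<bar>hfun g x\<bar>"
proof -
  have "\<bar>x\<bar> * e \<le> \<bar>x\<bar>"
    using e by (intro mult_left_le) auto
  then have close4: "\<bar>x' - x\<bar> \<le> \<bar>x\<bar> / 4"
    using close by linarith
  have pos: "x'\<^sup>2 + g > 0" "x\<^sup>2 + g > 0"
    using g by (auto intro: add_nonneg_pos)
  have factor: "\<bar>g - x * x'\<bar> \<le> 4/3 * (x'\<^sup>2 + g)"
    using mult_pos_of_close[OF x close4] mult_le_power2_of_close[OF close4] g zero_le_power2[of x']
    unfolding abs_le_iff distrib_left by (intro conjI) linarith+
  have "\<bar>hfun g x' - hfun g x\<bar> = sqrt g * \<bar>x' - x\<bar> * \<bar>g - x * x'\<bar> / ((x'\<^sup>2 + g) * (x\<^sup>2 + g))"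
    using pos g by (simp add: hfun_diff abs_mult abs_divide)
  also have "\<dots> \<le> sqrt g * (\<bar>x\<bar> * e / 4) * (4/3 * (x'\<^sup>2 + g)) / ((x'\<^sup>2 + g) * (x\<^sup>2 + g))"
    using pos g close factor e by (intro divide_right_mono mult_mono mult_left_mono) auto
  also have "\<dots> = e / 3 * (sqrt g * \<bar>x\<bar> / (x\<^sup>2 + g))"
  proof -
    have "sqrt g * (\<bar>x\<bar> * e / 4) * (4/3 * (x'\<^sup>2 + g)) = (x'\<^sup>2 + g) * (e / 3 * (sqrt g * \<bar>x\<bar>))"
      by (simp add: field_simps)
    moreover have "x'\<^sup>2 + g \<noteq> 0"
      using pos by simp
    ultimately show ?thesis
      by (simp only: nonzero_mult_divide_mult_cancel_left) simp
  qed
  also have "\<dots> = e / 3 * \<bar>hfun g x\<bar>"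
    using pos g by (simp add: hfun_def abs_mult abs_divide)
  finally show ?thesis .
qed

lemma norm_diff_le_of_componentwise:
  fixes a b :: "complex^'n"
  assumes "\<And>i. norm (b$i - a$i) \<le> c * norm (a$i)" "c \<ge> 0"
  shows "norm (b - a) \<le> c * norm a"
  unfolding norm_vec_def using assms
  by (simp add: L2_set_right_distrib L2_set_mono)

lemma norm_normalize_diff_le:
  fixes a b :: "'a::real_normed_vector"
  assumes "a \<noteq> 0" "b \<noteq> 0"
  shows "norm (b /\<^sub>R norm b - a /\<^sub>R norm a) \<le> 2 * norm (b - a) / norm a"
proof -
  have na: "norm a > 0" and nb: "norm b > 0"
    using assms by simp_all
  have "(norm a - norm b) / (norm a * norm b) = inverse (norm b) - inverse (norm a)"
    using na nb by (simp add: field_simps)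
  then have "b /\<^sub>R norm b - a /\<^sub>R norm a
      = (b - a) /\<^sub>R norm a + ((norm a - norm b) / (norm a * norm b)) *\<^sub>R b"
    by (simp add: scaleR_diff_left scaleR_diff_right divide_inverse_commute)
  then have "norm (b /\<^sub>R norm b - a /\<^sub>R norm a)
      \<le> norm ((b - a) /\<^sub>R norm a) + norm (((norm a - norm b) / (norm a * norm b)) *\<^sub>R b)"
    by (metis norm_triangle_ineq)
  also have "\<dots> = norm (b - a) / norm a + \<bar>norm a - norm b\<bar> / norm a"
  proof -
    have "norm ((b - a) /\<^sub>R norm a) = norm (b - a) / norm a"
      by (simp only: norm_scaleR abs_inverse abs_norm_cancel) (simp add: divide_inverse_commute)
    moreover have "norm (((norm a - norm b) / (norm a * norm b)) *\<^sub>R b) = \<bar>norm a - norm b\<bar> / norm a"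
      using na nb by (simp add: abs_divide abs_mult)
    ultimately show ?thesis
      by simp
  qed
  also have "\<dots> \<le> 2 * norm (b - a) / norm a"
    using na norm_triangle_ineq3[of b a]
    by (simp add: add_divide_distrib[symmetric] divide_right_mono norm_minus_commute)
  finally show ?thesis .
qed

lemma relative_error_of_condition_number:
  fixes lam lbar :: "'n::finite \<Rightarrow> real"
  assumes lam: "\<And>i. lam i \<noteq> 0"
    and s: "s = Max (range (\<lambda>i. \<bar>lam i\<bar>))" and kappa: "\<kappa> = s / Min (range (\<lambda>i. \<bar>lam i\<bar>))"
    and est: "\<And>i. \<bar>lbar i - lam i\<bar> \<le> s / (4 * \<kappa>) * \<epsilon>" and eps: "\<epsilon> \<ge> 0"
  shows "\<bar>lbar i - lam i\<bar> \<le> \<bar>lam i\<bar> * \<epsilon> / 4"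
proof -
  define m where "m = Min (range (\<lambda>i. \<bar>lam i\<bar>))"
  have "m \<in> range (\<lambda>i. \<bar>lam i\<bar>)"
    unfolding m_def by (rule Min_in) auto
  then have m_pos: "m > 0"
    using lam by auto
  have m_le: "m \<le> \<bar>lam i\<bar>"
    unfolding m_def by (rule Min_le) auto
  have "\<bar>lam i\<bar> \<le> s"
    unfolding s by (rule Max_ge) auto
  then have "s / (4 * \<kappa>) * \<epsilon> = m * \<epsilon> / 4"
    using m_pos m_le unfolding kappa m_def[symmetric] by (simp add: field_simps)
  then show ?thesis
    using est[of i] mult_right_mono[OF m_le eps] by linarith
qed

lemma normalized_hfun_coefficients_close:
  fixes lam lbar :: "'n::finite \<Rightarrow> real" and beta :: "'n \<Rightarrow> complex"
  assumes lam: "\<And>i. lam i \<noteq> 0" and rel: "\<And>i. \<bar>lbar i - lam i\<bar> \<le> \<bar>lam i\<bar> * \<epsilon> / 4"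
    and eps: "0 < \<epsilon>" "\<epsilon> \<le> 1" and gam: "\<gamma> > 0" and beta: "(\<chi> i. beta i) \<noteq> 0"
  defines "a \<equiv> \<chi> i. beta i * of_real (hfun \<gamma> (lam i))"
    and "b \<equiv> \<chi> i. beta i * of_real (hfun \<gamma> (lbar i))"
  shows "a \<noteq> 0" "b \<noteq> 0" "norm (b /\<^sub>R norm b - a /\<^sub>R norm a) \<le> \<epsilon>"
proof -
  have "lbar i \<noteq> 0" for i
    using rel[of i] lam[of i] eps mult_left_le[of \<epsilon> "\<bar>lam i\<bar>"] by auto
  moreover obtain i0 where "beta i0 \<noteq> 0"
    using beta by (auto simp: vec_eq_iff)
  ultimately show a: "a \<noteq> 0" and b: "b \<noteq> 0"
    using hfun_nonzero[OF lam gam] hfun_nonzero[OF _ gam]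
    by (auto simp: a_def b_def vec_eq_iff)
  have "norm (b - a) \<le> \<epsilon> / 3 * norm a"
  proof (rule norm_diff_le_of_componentwise)
    fix i
    have "norm (b $ i - a $ i) = norm (beta i) * \<bar>hfun \<gamma> (lbar i) - hfun \<gamma> (lam i)\<bar>"
      unfolding a_def b_def by (simp add: norm_mult flip: right_diff_distrib of_real_diff)
    also have "\<dots> \<le> norm (beta i) * (\<epsilon> / 3 * \<bar>hfun \<gamma> (lam i)\<bar>)"
      using hfun_relative_error[OF lam rel eps gam] by (rule mult_left_mono) simp
    also have "\<dots> = \<epsilon> / 3 * norm (a $ i)"
      unfolding a_def by (simp add: norm_mult)
    finally show "norm (b $ i - a $ i) \<le> \<epsilon> / 3 * norm (a $ i)" .
  qed (use eps in simp)
  then have "2 * norm (b - a) / norm a \<le> 2 * \<epsilon> / 3"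
    using a by (simp add: field_simps)
  then show "norm (b /\<^sub>R norm b - a /\<^sub>R norm a) \<le> \<epsilon>"
    using norm_normalize_diff_le[OF a b] eps by linarith
qed

theorem mainTheorem3:
  fixes F :: "complex^'n^'n"
    and v :: "'n \<Rightarrow> complex^'n"
    and lam lbar :: "'n \<Rightarrow> real"
    and beta :: "'n \<Rightarrow> complex"
    and y :: "complex^'n"
    and s \<kappa> \<gamma> \<epsilon> :: real
  assumes invF: "invertible F"
    and herm: "ctranspose F = F"
    and onb: "orthonormal_family v"
    and decomp: "F = (\<Sum>i\<in>UNIV. lam i *\<^sub>R outer (v i) (v i))"
    and s_def: "s = Max (range (\<lambda>i. \<bar>lam i\<bar>))"
    and kappa_def: "\<kappa> = s / Min (range (\<lambda>i. \<bar>lam i\<bar>))"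
    and gam: "\<gamma> > 0"
    and eps: "0 < \<epsilon>" "\<epsilon> \<le> 1"
    and y_def: "y = (\<Sum>i\<in>UNIV. beta i *s v i)"
    and y_unit: "norm y = 1"
    and est: "\<And>i. \<bar>lbar i - lam i\<bar> \<le> s / (4 * \<kappa>) * \<epsilon>"
  shows "(\<Sum>i\<in>UNIV. (beta i * of_real (hfun \<gamma> (lbar i))) *s v i) \<noteq> 0
       \<and> (\<Sum>i\<in>UNIV. (beta i * of_real (hfun \<gamma> (lam i))) *s v i) \<noteq> 0
       \<and> (let w = (\<Sum>i\<in>UNIV. (beta i * of_real (hfun \<gamma> (lbar i))) *s v i) /\<^sub>R
                   norm (\<Sum>i\<in>UNIV. (beta i * of_real (hfun \<gamma> (lbar i))) *s v i);
              wstar = (\<Sum>i\<in>UNIV. (beta i * of_real (hfun \<gamma> (lam i))) *s v i) /\<^sub>R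
                   norm (\<Sum>i\<in>UNIV. (beta i * of_real (hfun \<gamma> (lam i))) *s v i);
              u = matrix_inv (ctranspose F ** F + of_real \<gamma> *\<^sub>R mat 1) *v (ctranspose F *v y)
          in u \<noteq> 0 \<and> wstar = u /\<^sub>R norm u \<and> norm (w - wstar) \<le> \<epsilon>)"
proof -
  let ?V = "column_matrix v"
  define a where "a = (\<chi> i. beta i * of_real (hfun \<gamma> (lam i)))"
  define b where "b = (\<chi> i. beta i * of_real (hfun \<gamma> (lbar i)))"
  define u where "u = matrix_inv (ctranspose F ** F + of_real \<gamma> *\<^sub>R mat 1) *v (ctranspose F *v y)"
  have F: "F = spectral_matrix v (\<lambda>i. of_real (lam i))"
    using decomp spectral_matrix_of_outer_sum by simp
  have lam: "lam i \<noteq> 0" for i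
    using spectral_matrix_eigenvalue_nonzero[OF onb invF[unfolded F]] by simp
  have y: "y = ?V *v (\<chi> i. beta i)"
    unfolding y_def by (rule sum_scaleC_eq_column_matrix_mult)
  with y_unit have "(\<chi> i. beta i) \<noteq> 0"
    by auto
  have rel: "\<bar>lbar i - lam i\<bar> \<le> \<bar>lam i\<bar> * \<epsilon> / 4" for i
    using relative_error_of_condition_number[where lam = lam, OF lam s_def kappa_def est] eps by simp
  note coefficients = normalized_hfun_coefficients_close[where lam = lam and lbar = lbar,
      OF lam rel eps gam \<open>(\<chi> i. beta i) \<noteq> 0\<close>, folded a_def b_def]
  have u: "u = inverse (sqrt \<gamma>) *\<^sub>R (?V *v a)"
    unfolding u_def y a_def of_real_eq_id id_def by (rule regularized_solution_hfun[OF onb F herm gam])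
  have "?V *v b /\<^sub>R norm (?V *v b) - ?V *v a /\<^sub>R norm (?V *v a) = ?V *v (b /\<^sub>R norm b - a /\<^sub>R norm a)"
    by (simp only: column_matrix_mult_normalize[OF onb] matrix_vector_mult_diff_distrib)
  moreover have "?V *v a \<noteq> 0" "?V *v b \<noteq> 0"
    using coefficients norm_column_matrix_mult[OF onb, of a] norm_column_matrix_mult[OF onb, of b]
    by auto
  ultimately show ?thesis
    unfolding Let_def sum_scaleC_eq_column_matrix_mult a_def[symmetric] b_def[symmetric] u_def[symmetric]
    using coefficients gam by (simp add: u norm_column_matrix_mult[OF onb])
qed

end
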